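(* Let $\mathbb{B}$ be the structure defined in the context, let $t:B^k\to B$ be a polymorphism of $\mathbb{B}$, and let $i\in\{0,\dots,n\}$. Let $l_{a_1},l_{a_2},l_i,l_{i+1},\dots,l_n\in\mathbb{N}_0$ with $l_{a_1}+l_{a_2}+l_i+l_{i+1}+\dots+l_n=k$ and $p:=l_{a_1}+l_{a_2}\le l_i$. Suppose $$t(\underbrace{a_1,\dots,a_1}_{l_{a_1}},\underbrace{a_2,\dots,a_2}_{l_{a_2}},\underbrace{i,\dots,i}_{l_i},\underbrace{i+1,\dots,i+1}_{l_{i+1}},\dots,\underbrace{n,\dots,n}_{l_n})=i.$$ Then for all $x_1,\dots,x_{l_i-p}\in\{0,1,\dots,i-1\}$, $$t(\underbrace{a_1,\dots,a_1}_{p},\underbrace{a_2,\dots,a_2}_{p},x_1,\dots,x_{l_i-p},\underbrace{i+1,\dots,i+1}_{l_{i+1}},\dots,\underbrace{n,\dots,n}_{l_n})\neq a_1$$ and $$t(\underbrace{a_2,\dots,a_2}_{p},\underbrace{a_1,\dots,a_1}_{p},x_1,\dots,x_{l_i-p},\underbrace{i+1,\dots,i+1}_{l_{i+1}},\dots,\underbrace{n,\dots,n}_{l_n})\neq a_2.$$ The same holds if one fixed permutation of the $k$ coordinate positions is applied to the hypothesis tuple and to the conclusion tuples.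
   Context: Fix an integer $n\ge0$. Let $B=\{a_1,a_2,0,1,\dots,n\}$ and, for $r\in\{0,\dots,n+1\}$, let $B_r=\{a_1,a_2,0,1,\dots,r-1\}$ (so $B_0=\{a_1,a_2\}$, $B_{n+1}=B$), with the linear order $a_1<a_2<0<1<\dots<n$. For $i\in\{0,\dots,n\}$ and $j\in\{1,2\}$ let $$R_i^{(j)}=\Big(B_i\times\{a_1,a_2,i\}\setminus\{(a_j,i)\}\Big)\cup\{(r,r): i<r\le n\}\subseteq B^2.$$ Let $\mathbb{B}$ be the relational structure with universe $B$ whose relations are all $R_i^{(j)}$ ($i\in\{0,\dots,n\}$, $j\in\{1,2\}$) together with every nonempty subset $X\subseteq B$ as a unary relation. A polymorphism of $\mathbb{B}$ is an operation $t:B^k\to B$ compatible with all these relations, where compatibility with a relation $R$ means that applying $t$ coordinatewise to any $k$ tuples of $R$ yields a tuple of $R$. *)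

theory Defs
  imports "HOL-Combinatorics.Permutations"
begin

datatype elt = A1 | A2 | N nat

definition Bset :: "nat \<Rightarrow> elt set" where
  "Bset n = {A1, A2} \<union> N ` {0..n}"

definition Bpre :: "nat \<Rightarrow> elt set" where
  "Bpre r = {A1, A2} \<union> N ` {0..<r}"

definition Rel :: "nat \<Rightarrow> nat \<Rightarrow> nat \<Rightarrow> (elt \<times> elt) set" where
  "Rel n i j = (Bpre i \<times> {A1, A2, N i} - {(if j = 1 then A1 else A2, N i)})
               \<union> {(N r, N r) | r. i < r \<and> r \<le> n}"

definition binrels :: "nat \<Rightarrow> (elt \<times> elt) set set" where
  "binrels n = {Rel n i j | i j. i \<le> n \<and> j \<in> {1, 2}}"

text \<open>k-ary operations on B are modelled as functions on lists; only their values
  on lists of length k with entries in B matter.\<close>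
definition preserves_unary :: "nat \<Rightarrow> (elt list \<Rightarrow> elt) \<Rightarrow> elt set \<Rightarrow> bool" where
  "preserves_unary k t X \<longleftrightarrow>
     (\<forall>xs. length xs = k \<and> set xs \<subseteq> X \<longrightarrow> t xs \<in> X)"

definition preserves_binary :: "nat \<Rightarrow> (elt list \<Rightarrow> elt) \<Rightarrow> (elt \<times> elt) set \<Rightarrow> bool" where
  "preserves_binary k t R \<longleftrightarrow>
     (\<forall>xs ys. length xs = k \<and> length ys = k \<and> (\<forall>m<k. (xs ! m, ys ! m) \<in> R)
         \<longrightarrow> (t xs, t ys) \<in> R)"

definition polymorphism :: "nat \<Rightarrow> nat \<Rightarrow> (elt list \<Rightarrow> elt) \<Rightarrow> bool" where
  "polymorphism n k t \<longleftrightarrow>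
     preserves_unary k t (Bset n) \<and>
     (\<forall>R \<in> binrels n. preserves_binary k t R) \<and>
     (\<forall>X. X \<noteq> {} \<and> X \<subseteq> Bset n \<longrightarrow> preserves_unary k t X)"

definition blocks :: "(nat \<Rightarrow> nat) \<Rightarrow> nat \<Rightarrow> nat \<Rightarrow> elt list" where
  "blocks l lo n = concat (map (\<lambda>r. replicate (l r) (N r)) [lo..<Suc n])"

end

theory Submission
  imports Defs
begin

text \<open>Put the hypothesis tuple h and a conclusion tuple c side by side. Coordinatewise
  they lie in R_i^(j): the first p positions pair a_j with a_1, a_2, the next p pair the other
  constant with i, each x_m < i is paired with i, and the blocks above i are paired with
  themselves (p \<le> l_i makes h carry i in all these middle positions). Since t preserves R_i^(j),
  also (t c, t h) = (t c, i) \<in> R_i^(j), and the only pair (c', i) missing from that relation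
  is (a_j, i). Permuting coordinates simultaneously does not affect coordinatewise
  relatedness.\<close>

lemma preserves_binary_list_all2:
  assumes "preserves_binary k t R" "list_all2 (\<lambda>x y. (x, y) \<in> R) xs ys" "length ys = k"
  shows "(t xs, t ys) \<in> R"
  using assms unfolding preserves_binary_def by (auto simp: list_all2_conv_all_nth)

lemma preserves_binary_permute_list:
  assumes "preserves_binary k t R" "\<sigma> permutes {..<k}"
    and "list_all2 (\<lambda>x y. (x, y) \<in> R) xs ys" "length ys = k"
  shows "(t (permute_list \<sigma> xs), t (permute_list \<sigma> ys)) \<in> R"
proof (rule preserves_binary_list_all2[OF assms(1)])
  have "length xs = k" using assms(3,4) by (simp add: list_all2_lengthD)
  then show "list_all2 (\<lambda>x y. (x, y) \<in> R) (permute_list \<sigma> xs) (permute_list \<sigma> ys)"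
    using assms(2,3) by (simp add: list_all2_permute_list_iff)
qed (use assms(4) in simp)

lemma blocks_Suc: "i \<le> n \<Longrightarrow> blocks l i n = replicate (l i) (N i) @ blocks l (Suc i) n"
  unfolding blocks_def by (simp add: upt_rec)

lemma set_blocks: "set (blocks l lo n) \<subseteq> N ` {lo..n}"
  unfolding blocks_def by (auto split: if_splits)

lemma length_blocks: "length (blocks l lo n) = (\<Sum>r = lo..n. l r)"
  unfolding blocks_def
  by (simp add: length_concat comp_def atLeastLessThanSuc_atLeastAtMost
      sum_set_upt_conv_sum_list_nat[symmetric] del: upt_Suc)

lemma list_all2_replicate_right:
  "length xs = m \<Longrightarrow> (\<And>x. x \<in> set xs \<Longrightarrow> P x y) \<Longrightarrow> list_all2 P xs (replicate m y)"
  by (auto simp: list_all2_conv_all_nth)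

lemma list_all2_diagonal: "(\<And>x. x \<in> set xs \<Longrightarrow> P x x) \<Longrightarrow> list_all2 P xs xs"
  by (auto simp: list_all2_conv_all_nth)

lemma Rel_A_right: "a \<in> {A1, A2} \<Longrightarrow> b \<in> {A1, A2} \<Longrightarrow> (a, b) \<in> Rel n i j"
  by (auto simp: Rel_def Bpre_def)

lemma Rel_N_less: "r < i \<Longrightarrow> (N r, N i) \<in> Rel n i j"
  by (auto simp: Rel_def Bpre_def)

lemma Rel_N_diag: "i < r \<Longrightarrow> r \<le> n \<Longrightarrow> (N r, N r) \<in> Rel n i j"
  by (auto simp: Rel_def)

lemma Rel_excluded_iff:
  "a \<in> {A1, A2} \<Longrightarrow> (a, N i) \<in> Rel n i j \<longleftrightarrow> a \<noteq> (if j = 1 then A1 else A2)"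
  by (auto simp: Rel_def Bpre_def)

lemma Rel_related_tuples:
  assumes "a \<in> {A1, A2}" "(b, N i) \<in> Rel n i j"
    and "length xs = m" "set xs \<subseteq> N ` {0..<i}"
  shows "list_all2 (\<lambda>x y. (x, y) \<in> Rel n i j)
           (replicate (la1 + la2) a @ replicate (la1 + la2) b @ xs @ blocks l (Suc i) n)
           ((replicate la1 A1 @ replicate la2 A2) @ replicate (la1 + la2) (N i)
              @ replicate m (N i) @ blocks l (Suc i) n)"
proof (intro list_all2_appendI)
  show "list_all2 (\<lambda>x y. (x, y) \<in> Rel n i j) (replicate (la1 + la2) a)
          (replicate la1 A1 @ replicate la2 A2)"
    using assms(1) by (auto simp: list_all2_conv_all_nth nth_append intro: Rel_A_right)
  show "list_all2 (\<lambda>x y. (x, y) \<in> Rel n i j) (replicate (la1 + la2) b) (replicate (la1 + la2) (N i))"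
    using assms(2) by (simp add: list_all2_conv_all_nth)
  show "list_all2 (\<lambda>x y. (x, y) \<in> Rel n i j) xs (replicate m (N i))"
    using assms(3,4) by (auto intro!: list_all2_replicate_right Rel_N_less)
  show "list_all2 (\<lambda>x y. (x, y) \<in> Rel n i j) (blocks l (Suc i) n) (blocks l (Suc i) n)"
    using set_blocks[of l "Suc i" n] by (auto intro!: list_all2_diagonal Rel_N_diag)
qed

lemma polymorphism_value_not_excluded:
  assumes poly: "polymorphism n k t" and "i \<le> n" "j \<in> {1, 2}" and perm: "\<sigma> permutes {..<k}"
    and rel: "list_all2 (\<lambda>x y. (x, y) \<in> Rel n i j) xs ys" "length ys = k"
    and val: "t (permute_list \<sigma> ys) = N i"
  shows "t (permute_list \<sigma> xs) \<noteq> (if j = 1 then A1 else A2)"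
proof -
  have "Rel n i j \<in> binrels n"
    using assms(2,3) unfolding binrels_def by blast
  then have "preserves_binary k t (Rel n i j)"
    using poly unfolding polymorphism_def by blast
  from preserves_binary_permute_list[OF this perm rel] val
  have "(t (permute_list \<sigma> xs), N i) \<in> Rel n i j" by simp
  then show ?thesis by (auto simp: Rel_def)
qed

theorem mainTheorem8:
  fixes n k i la1 la2 :: nat and l :: "nat \<Rightarrow> nat" and t :: "elt list \<Rightarrow> elt"
    and \<sigma> :: "nat \<Rightarrow> nat"
  assumes poly: "polymorphism n k t"
    and i_le: "i \<le> n"
    and sum_k: "la1 + la2 + (\<Sum>r = i..n. l r) = k"
    and p_le: "la1 + la2 \<le> l i"
    and perm: "\<sigma> permutes {..<k}"
    and hyp: "t (permute_list \<sigma>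
                 (replicate la1 A1 @ replicate la2 A2 @ blocks l i n)) = N i"
  shows "\<forall>xs. length xs = l i - (la1 + la2) \<and> set xs \<subseteq> N ` {0..<i} \<longrightarrow>
           t (permute_list \<sigma> (replicate (la1 + la2) A1 @ replicate (la1 + la2) A2 @ xs
                                @ blocks l (Suc i) n)) \<noteq> A1 \<and>
           t (permute_list \<sigma> (replicate (la1 + la2) A2 @ replicate (la1 + la2) A1 @ xs
                                @ blocks l (Suc i) n)) \<noteq> A2"
proof (intro allI impI conjI)
  fix xs assume xs: "length xs = l i - (la1 + la2) \<and> set xs \<subseteq> N ` {0..<i}"
  let ?h = "replicate la1 A1 @ replicate la2 A2 @ blocks l i n"
  have h_split: "?h = (replicate la1 A1 @ replicate la2 A2) @ replicate (la1 + la2) (N i)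
                        @ replicate (l i - (la1 + la2)) (N i) @ blocks l (Suc i) n"
    using p_le by (simp add: blocks_Suc[OF i_le] replicate_add[symmetric])
  have len_h: "length ?h = k"
    using sum_k by (simp add: length_blocks)
  have "list_all2 (\<lambda>x y. (x, y) \<in> Rel n i 1)
          (replicate (la1 + la2) A1 @ replicate (la1 + la2) A2 @ xs @ blocks l (Suc i) n) ?h"
    unfolding h_split using xs by (intro Rel_related_tuples) (auto simp: Rel_excluded_iff)
  from polymorphism_value_not_excluded[OF poly i_le _ perm this len_h hyp]
  show "t (permute_list \<sigma> (replicate (la1 + la2) A1 @ replicate (la1 + la2) A2 @ xs
          @ blocks l (Suc i) n)) \<noteq> A1" by simp
  have "list_all2 (\<lambda>x y. (x, y) \<in> Rel n i 2)
          (replicate (la1 + la2) A2 @ replicate (la1 + la2) A1 @ xs @ blocks l (Suc i) n) ?h"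
    unfolding h_split using xs by (intro Rel_related_tuples) (auto simp: Rel_excluded_iff)
  from polymorphism_value_not_excluded[OF poly i_le _ perm this len_h hyp]
  show "t (permute_list \<sigma> (replicate (la1 + la2) A2 @ replicate (la1 + la2) A1 @ xs
          @ blocks l (Suc i) n)) \<noteq> A2" by simp
qed

end
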